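(* Let $H$ be an infinite-dimensional real Hilbert space. Then for every integer $m\ge1$ and every $\alpha\in(0,1/3]$, $$\tfrac12 m^{-\alpha/2}\le \gamma_m(\alpha,H)\le m^{-\alpha/2}.$$
   Context: A (symmetric) dictionary in $H$ is a set $\mathcal D$ of unit vectors with dense span and $g\in\mathcal D\Rightarrow -g\in\mathcal D$. $A_1(\mathcal D)$ is the closed convex hull of $\mathcal D$ and $\|f\|_{A_1(\mathcal D)}:=\inf\{M:f/M\in A_1(\mathcal D)\}$. Pure Greedy Algorithm (PGA): for $f\in H$ let $g(f)\in\mathcal D$ be an element maximizing $\langle f,g\rangle$ over $\mathcal D$ (assumed to exist); $f_0:=f$, $G_0(f,\mathcal D):=0$, $G_m(f,\mathcal D):=G_{m-1}(f,\mathcal D)+\langle f_{m-1},g(f_{m-1})\rangle g(f_{m-1})$, $f_m:=f-G_m(f,\mathcal D)$. For $\alpha\in(0,1]$, $$\gamma_m(\alpha,H):=\sup_{\{G_m(f,\mathcal D)\},f,\mathcal D}\frac{\|f-G_m(f,\mathcal D)\|}{\|f\|^{1-\alpha}\|f\|_{A_1(\mathcal D)}^{\alpha}},$$ supremum over all dictionaries $\mathcal D$, all $f\ne0$ with $\|f\|_{A_1(\mathcal D)}<\infty$, and all possible realizations of the PGA. *)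

theory Defs
  imports "HOL-Analysis.Analysis"
begin

definition dictionary :: "'a::real_inner set \<Rightarrow> bool" where
  "dictionary D \<longleftrightarrow> (\<forall>g\<in>D. norm g = 1) \<and> closure (span D) = UNIV \<and> (\<forall>g\<in>D. - g \<in> D)"

definition A1 :: "'a::real_inner set \<Rightarrow> 'a set" where
  "A1 D = closure (convex hull D)"

definition A1_scales :: "'a::real_inner set \<Rightarrow> 'a \<Rightarrow> real set" where
  "A1_scales D f = {M. 0 < M \<and> scaleR (inverse M) f \<in> A1 D}"

definition A1_norm :: "'a::real_inner set \<Rightarrow> 'a \<Rightarrow> real" where
  "A1_norm D f = Inf (A1_scales D f)"

text \<open>A realization of the Pure Greedy Algorithm: r k is the residual f_k = f - G_k(f,D);
  at each step any maximizer g of inner (r k) over D may be chosen.\<close>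
definition pga_realization :: "'a::real_inner set \<Rightarrow> 'a \<Rightarrow> (nat \<Rightarrow> 'a) \<Rightarrow> bool" where
  "pga_realization D f r \<longleftrightarrow> r 0 = f \<and>
     (\<forall>k. \<exists>g\<in>D. (\<forall>h\<in>D. inner (r k) h \<le> inner (r k) g) \<and>
                 r (Suc k) = r k - scaleR (inner (r k) g) g)"

definition gamma_pga :: "nat \<Rightarrow> real \<Rightarrow> 'a::real_inner itself \<Rightarrow> ereal" where
  "gamma_pga m \<alpha> _ =
     (SUP x \<in> {(D :: 'a set, f :: 'a, r :: nat \<Rightarrow> 'a).
                 dictionary D \<and> f \<noteq> 0 \<and> A1_scales D f \<noteq> {} \<and> pga_realization D f r}.
        (case x of (D, f, r) \<Rightarrow>
          ereal (norm (r m) / (norm f powr (1 - \<alpha>) * A1_norm D f powr \<alpha>))))"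

end

theory Submission
  imports Defs
begin

text \<open>
  Let a_k = ||f_k||^2, let c_k = <f_k, g(f_k)> be the greedy coefficient and
  M = ||f||_A1. Then a_(k+1) = a_k - c_k^2. Since c_k bounds <f_k, h> on the dictionary, hence
  on A_1(D), and by symmetry also |<f_k, g_j>|, expanding f_k = f - sum_(j<k) c_j g_j in
  ||f_k||^2 = <f_k, f_k> gives a_k <= c_k B_k with B_k = M + sum_(j<k) c_j. This makes a_k B_k
  nonincreasing, so a_k^2 <= c_k a_0 M and a_(k+1) <= a_k - a_k^4 / (a_0 M)^2. Then 1 / a_k^3
  grows by at least 3 / (a_0 M)^2 per step, i.e. 3 m ||f_m||^6 <= ||f||^4 M^2, and together
  with ||f_m|| <= ||f|| an interpolation with exponent 3 alpha <= 1 yields m^(-alpha/2).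

  For orthonormal e_0, ..., e_(2m-1), take the dictionary of all +-e_i and all
  unit vectors orthogonal to them, and f = sum_i e_i. The greedy algorithm may remove one e_i
  per step, so ||f_m|| = sqrt m, ||f|| = sqrt (2m) and ||f||_A1 <= 2m.
\<close>

section \<open>Decay of the greedy energy\<close>

lemma cube_one_minus_mul_le_one:
  fixes t :: real
  shows "(1 - t)^3 * (1 + 3*t) \<le> 1"
proof -
  have "1 - (1 - t)^3 * (1 + 3*t) = t^2 * (3*(t - 4/3)^2 + 2/3)"
    by (simp add: power2_eq_square power3_eq_cube algebra_simps)
  moreover have "0 \<le> t^2 * (3*(t - 4/3)^2 + 2/3)" by simp
  ultimately show ?thesis by linarith
qed

lemma cube_decay_step:
  fixes x y Q :: real
  assumes "0 < Q" "0 \<le> x" "0 \<le> y" "y \<le> x - x^4 / Q"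
  shows "y^3 * (Q + 3 * x^3) \<le> x^3 * Q"
proof -
  define t where "t = x^3 / Q"
  have "0 \<le> t" using assms by (simp add: t_def)
  have "y \<le> x * (1 - t)" using assms by (simp add: t_def field_simps power_def)
  then have "y^3 \<le> x^3 * (1 - t)^3"
    using power_mono[of y "x * (1 - t)" 3] \<open>0 \<le> y\<close> by (simp add: power_mult_distrib)
  then have "y^3 * (Q * (1 + 3*t)) \<le> x^3 * (1 - t)^3 * (Q * (1 + 3*t))"
    using \<open>0 \<le> t\<close> \<open>0 < Q\<close> by (intro mult_right_mono) auto
  also have "\<dots> = x^3 * Q * ((1 - t)^3 * (1 + 3*t))" by simp
  also have "\<dots> \<le> x^3 * Q"
    using cube_one_minus_mul_le_one[of t] assms by (intro mult_left_le) auto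
  finally show ?thesis using \<open>0 < Q\<close> by (simp add: t_def algebra_simps)
qed

lemma cube_decay_rate:
  fixes x :: "nat \<Rightarrow> real" and Q :: real
  assumes "0 < Q" "\<And>k. 0 \<le> x k" "\<And>k. x (Suc k) \<le> x k - x k ^ 4 / Q"
  shows "3 * real k * x k ^ 3 \<le> Q"
proof (induction k)
  case (Suc k)
  let ?S = "Q + 3 * x k ^ 3"
  have "0 < ?S" using assms by (simp add: add_pos_nonneg)
  have "3 * real (Suc k) * x (Suc k) ^ 3 * ?S \<le> 3 * real (Suc k) * (x k ^ 3 * Q)"
    using cube_decay_step[OF assms(1,2,2,3)] by (simp add: mult.assoc)
  also have "\<dots> = (3 * real k * x k ^ 3 + 3 * x k ^ 3) * Q" by (simp add: algebra_simps)
  also have "\<dots> \<le> ?S * Q" using Suc \<open>0 < Q\<close> by (intro mult_right_mono) auto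
  finally show ?case using \<open>0 < ?S\<close> by (simp add: mult.commute)
qed (use assms in simp)

lemma greedy_energy_nonincreasing:
  fixes a c :: "nat \<Rightarrow> real" and M :: real
  assumes c_nonneg: "\<And>k. 0 \<le> c k"
    and a_Suc: "\<And>k. a (Suc k) = a k - c k ^ 2"
    and a_le: "\<And>k. a k \<le> c k * (M + (\<Sum>j<k. c j))"
  shows "a k * (M + (\<Sum>j<k. c j)) \<le> a 0 * M"
proof (induction k)
  case (Suc k)
  let ?B = "M + (\<Sum>j<k. c j)"
  have "a (Suc k) * (M + (\<Sum>j<Suc k. c j)) = a k * ?B + c k * (a k - c k * ?B) - c k ^ 3"
    by (simp add: a_Suc algebra_simps power2_eq_square power3_eq_cube)
  also have "\<dots> \<le> a k * ?B"
  proof -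
    have "c k * (a k - c k * ?B) \<le> 0"
      using a_le[of k] c_nonneg[of k] by (intro mult_nonneg_nonpos) auto
    then show ?thesis using zero_le_power[OF c_nonneg[of k], of 3] by linarith
  qed
  finally show ?case using Suc by linarith
qed simp

lemma greedy_decay_rate:
  fixes a c :: "nat \<Rightarrow> real" and M :: real
  assumes "0 < M" "0 < a 0" "\<And>k. 0 \<le> a k" "\<And>k. 0 \<le> c k"
    and a_Suc: "\<And>k. a (Suc k) = a k - c k ^ 2"
    and a_le: "\<And>k. a k \<le> c k * (M + (\<Sum>j<k. c j))"
  shows "3 * real k * a k ^ 3 \<le> (a 0 * M)^2"
proof (rule cube_decay_rate)
  define P where "P = a 0 * M"
  have "0 < P" using assms(1,2) by (simp add: P_def)
  show "0 < (a 0 * M)^2" using assms(1,2) by simp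
  fix k
  have "a k * a k \<le> a k * (c k * (M + (\<Sum>j<k. c j)))"
    using a_le assms(3) by (rule mult_left_mono)
  also have "\<dots> = c k * (a k * (M + (\<Sum>j<k. c j)))" by simp
  also have "\<dots> \<le> c k * P"
    using greedy_energy_nonincreasing[OF assms(4) a_Suc a_le] assms(4)
    unfolding P_def by (rule mult_left_mono)
  finally have "a k ^ 2 / P \<le> c k" using \<open>0 < P\<close> by (simp add: field_simps power2_eq_square)
  then have "(a k ^ 2 / P)^2 \<le> c k ^ 2" using \<open>0 < P\<close> by (intro power_mono) auto
  then show "a (Suc k) \<le> a k - a k ^ 4 / (a 0 * M)^2"
    using assms(1,2) by (simp add: a_Suc P_def power_divide flip: power_mult)
qed (use assms in auto)

lemma powr_of_power:
  fixes x a :: real and k :: nat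
  assumes "0 < x"
  shows "(x ^ k) powr a = x powr (k * a)"
  using powr_powr[of x "real k" a] powr_realpow[OF assms, of k] by simp

lemma le_powr_of_pow6_le:
  fixes u v \<alpha> :: real
  assumes "0 \<le> u" "u \<le> 1" "u ^ 6 \<le> v" "0 \<le> \<alpha>" "\<alpha> \<le> 1/3"
  shows "u \<le> v powr (\<alpha> / 2)"
proof (cases "u = 0")
  case False
  then have "0 < u" using assms(1) by simp
  have "u = u powr 1" using \<open>0 < u\<close> by simp
  also have "\<dots> \<le> u powr (3 * \<alpha>)" using assms by (intro powr_mono') auto
  also have "\<dots> = (u ^ 6) powr (\<alpha> / 2)"
    using \<open>0 < u\<close> by (simp add: powr_of_power)
  also have "\<dots> \<le> v powr (\<alpha> / 2)" using assms by (intro powr_mono2) auto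
  finally show ?thesis .
qed simp

lemma ratio_le_powr:
  fixes \<rho> n M t \<alpha> :: real
  assumes "0 < n" "0 < M" "0 < t" "0 \<le> \<rho>" "\<rho> \<le> n" "t * \<rho> ^ 6 \<le> n ^ 4 * M ^ 2"
    and "0 \<le> \<alpha>" "\<alpha> \<le> 1/3"
  shows "\<rho> / (n powr (1 - \<alpha>) * M powr \<alpha>) \<le> t powr (- \<alpha> / 2)"
proof -
  \<comment> \<open>With \<open>u = \<rho> / n\<close> the hypothesis reads \<open>u\<^sup>6 \<le> q\<^sup>2\<close>
    and the claim \<open>u \<le> q powr \<alpha>\<close>.\<close>
  define q where "q = M / (n * sqrt t)"
  have "0 < q" using assms by (simp add: q_def)
  have "(\<rho> / n) ^ 6 = t * \<rho> ^ 6 / (t * n ^ 6)"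
    using assms(3) by (simp add: power_divide)
  also have "\<dots> \<le> n ^ 4 * M ^ 2 / (t * n ^ 6)"
    using assms by (intro divide_right_mono) auto
  also have "\<dots> = q ^ 2"
    using assms(1,3) by (simp add: q_def power_divide power_mult_distrib power2_eq_square power_def)
  finally have "\<rho> / n \<le> (q ^ 2) powr (\<alpha> / 2)"
    using assms by (intro le_powr_of_pow6_le) auto
  also have "\<dots> = M powr \<alpha> / (n powr \<alpha> * t powr (\<alpha> / 2))"
  proof -
    have "sqrt t powr \<alpha> = t powr (\<alpha> / 2)"
      using assms(3) by (simp add: powr_powr flip: powr_half_sqrt)
    then show ?thesis
      using \<open>0 < q\<close> assms(1-3) by (simp add: powr_of_power q_def powr_divide powr_mult)
  qed
  finally have "\<rho> / n \<le> M powr \<alpha> / (n powr \<alpha> * t powr (\<alpha> / 2))" .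
  moreover have "0 < n powr \<alpha>" "0 < M powr \<alpha>" "0 < t powr (\<alpha> / 2)"
    using assms(1-3) by simp_all
  moreover have "n powr (1 - \<alpha>) = n / n powr \<alpha>" "t powr (- \<alpha> / 2) = 1 / t powr (\<alpha> / 2)"
    using assms(1,3) by (simp_all add: powr_diff powr_minus_divide)
  ultimately show ?thesis
    using assms(1) by (simp only:) (simp add: field_simps)
qed

lemma A1_subset:
  assumes "D \<subseteq> C" "closed C" "convex C"
  shows "A1 D \<subseteq> C"
  unfolding A1_def using assms by (intro closure_minimal hull_minimal)

lemma A1_norm_le:
  assumes "M \<in> A1_scales D f"
  shows "A1_norm D f \<le> M"
  unfolding A1_norm_def
  by (rule cInf_lower[OF assms]) (auto simp: A1_scales_def intro: bdd_belowI[of _ 0])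

lemma le_mult_A1_norm:
  assumes "A1_scales D f \<noteq> {}" "0 \<le> c" "\<And>M. M \<in> A1_scales D f \<Longrightarrow> b \<le> c * M"
  shows "b \<le> c * A1_norm D f"
proof (cases "c = 0")
  case True
  then show ?thesis using assms(1,3) by fastforce
next
  case False
  then have "0 < c" using assms(2) by simp
  have "b / c \<le> A1_norm D f"
    unfolding A1_norm_def
    by (rule cInf_greatest) (use assms(1,3) \<open>0 < c\<close> in \<open>auto simp: field_simps\<close>)
  then show ?thesis using \<open>0 < c\<close> by (simp add: field_simps)
qed

lemma inner_le_mult_A1_norm:
  assumes "A1_scales D f \<noteq> {}" "0 \<le> c" "\<And>h. h \<in> D \<Longrightarrow> inner x h \<le> c"
  shows "inner x f \<le> c * A1_norm D f"
proof (rule le_mult_A1_norm[OF assms(1,2)])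
  fix M assume "M \<in> A1_scales D f"
  then have "0 < M" "inverse M *\<^sub>R f \<in> A1 D" by (auto simp: A1_scales_def)
  moreover have "A1 D \<subseteq> {y. inner x y \<le> c}"
    using assms(3) by (intro A1_subset closed_halfspace_le convex_halfspace_le) auto
  ultimately show "inner x f \<le> c * M" by (auto simp: field_simps)
qed

lemma norm_le_A1_norm:
  assumes "A1_scales D f \<noteq> {}" "\<And>h. h \<in> D \<Longrightarrow> norm h = 1"
  shows "norm f \<le> A1_norm D f"
proof -
  have "norm f \<le> 1 * M" if "M \<in> A1_scales D f" for M
  proof -
    have "0 < M" "inverse M *\<^sub>R f \<in> A1 D" using that by (auto simp: A1_scales_def)
    moreover have "A1 D \<subseteq> cball 0 1"
      using assms(2) by (intro A1_subset) auto
    ultimately show ?thesis by (auto simp: field_simps)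
  qed
  then show ?thesis using le_mult_A1_norm[OF assms(1), of 1] by simp
qed

lemma A1_norm_pos:
  assumes "A1_scales D f \<noteq> {}" "\<And>h. h \<in> D \<Longrightarrow> norm h = 1" "f \<noteq> 0"
  shows "0 < A1_norm D f"
  using norm_le_A1_norm[OF assms(1,2)] assms(3) by (meson order_less_le_trans zero_less_norm_iff)

section \<open>Residuals of the pure greedy algorithm\<close>

locale greedy_run =
  fixes D :: "'a::real_inner set" and r g :: "nat \<Rightarrow> 'a"
  assumes norm_dict: "\<And>h. h \<in> D \<Longrightarrow> norm h = 1"
    and uminus_dict: "\<And>h. h \<in> D \<Longrightarrow> - h \<in> D"
    and atom_in_dict: "g k \<in> D"
    and atom_maximal: "\<And>h. h \<in> D \<Longrightarrow> inner (r k) h \<le> inner (r k) (g k)"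
    and residual_Suc: "r (Suc k) = r k - inner (r k) (g k) *\<^sub>R g k"
begin

definition coeff :: "nat \<Rightarrow> real" where
  "coeff k = inner (r k) (g k)"

lemma abs_inner_le_coeff:
  assumes "h \<in> D"
  shows "\<bar>inner (r k) h\<bar> \<le> coeff k"
  using atom_maximal[OF assms, of k] atom_maximal[OF uminus_dict[OF assms], of k]
  by (simp add: coeff_def abs_le_iff)

lemma coeff_nonneg: "0 \<le> coeff k"
  using abs_inner_le_coeff[OF atom_in_dict] by (rule order_trans[rotated]) simp

lemma norm_residual_Suc: "norm (r (Suc k)) ^ 2 = norm (r k) ^ 2 - coeff k ^ 2"
proof -
  have "inner (g k) (g k) = 1" using norm_dict[OF atom_in_dict] by (simp add: dot_square_norm)
  then show ?thesis
    unfolding power2_norm_eq_inner residual_Suc[of k]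
    by (simp add: inner_diff_left inner_diff_right inner_commute coeff_def power2_eq_square)
qed

lemma residual_eq: "r k = r 0 - (\<Sum>j<k. coeff j *\<^sub>R g j)"
  by (induction k) (simp_all add: residual_Suc coeff_def)

lemma norm_residual_le:
  assumes "A1_scales D (r 0) \<noteq> {}"
  shows "norm (r k) ^ 2 \<le> coeff k * (A1_norm D (r 0) + (\<Sum>j<k. coeff j))"
proof -
  have "norm (r k) ^ 2 = inner (r k) (r 0) - (\<Sum>j<k. coeff j * inner (r k) (g j))"
    unfolding power2_norm_eq_inner
    by (subst (2) residual_eq) (simp add: inner_diff_right inner_sum_right)
  also have "\<dots> \<le> coeff k * A1_norm D (r 0) + (\<Sum>j<k. coeff j * coeff k)"
  proof -
    have "inner (r k) (r 0) \<le> coeff k * A1_norm D (r 0)"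
      using assms coeff_nonneg atom_maximal by (intro inner_le_mult_A1_norm) (auto simp: coeff_def)
    moreover have "- coeff j * inner (r k) (g j) \<le> coeff j * coeff k" for j
      using mult_left_mono[OF _ coeff_nonneg, of "- inner (r k) (g j)" "coeff k" j]
        abs_inner_le_coeff[OF atom_in_dict, of k j] by simp
    then have "- (\<Sum>j<k. coeff j * inner (r k) (g j)) \<le> (\<Sum>j<k. coeff j * coeff k)"
      by (simp add: sum_mono flip: sum_negf)
    ultimately show ?thesis by linarith
  qed
  also have "\<dots> = coeff k * (A1_norm D (r 0) + (\<Sum>j<k. coeff j))"
    by (simp add: algebra_simps sum_distrib_left)
  finally show ?thesis .
qed

lemma norm_residual_le_norm: "norm (r k) \<le> norm (r 0)"
proof (induction k)
  case (Suc k)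
  have "norm (r (Suc k)) ^ 2 \<le> norm (r k) ^ 2" by (simp add: norm_residual_Suc)
  then show ?case using Suc by (meson norm_ge_zero power2_le_imp_le order_trans)
qed simp

theorem residual_decay:
  assumes "r 0 \<noteq> 0" "A1_scales D (r 0) \<noteq> {}"
  shows "3 * real k * norm (r k) ^ 6 \<le> norm (r 0) ^ 4 * A1_norm D (r 0) ^ 2"
proof -
  have "0 < A1_norm D (r 0)" using A1_norm_pos[OF assms(2) norm_dict assms(1)] .
  then have "3 * real k * (norm (r k) ^ 2) ^ 3 \<le> (norm (r 0) ^ 2 * A1_norm D (r 0)) ^ 2"
    using assms coeff_nonneg norm_residual_Suc norm_residual_le
    by (intro greedy_decay_rate[where c = coeff]) auto
  then show ?thesis by (simp add: power_mult_distrib flip: power_mult)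
qed

end

lemma pga_realization_greedy_run:
  assumes "dictionary D" "pga_realization D f r"
  obtains g where "greedy_run D r g" "r 0 = f"
proof -
  obtain g where "\<And>k. g k \<in> D" "\<And>k h. h \<in> D \<Longrightarrow> inner (r k) h \<le> inner (r k) (g k)"
    "\<And>k. r (Suc k) = r k - inner (r k) (g k) *\<^sub>R g k"
    using assms(2) unfolding pga_realization_def by metis
  then have "greedy_run D r g"
    using assms(1) by unfold_locales (auto simp: dictionary_def)
  then show thesis using assms(2) that by (simp add: pga_realization_def)
qed

lemma pga_residual_ratio_le:
  fixes D :: "'a::real_inner set"
  assumes "dictionary D" "f \<noteq> 0" "A1_scales D f \<noteq> {}" "pga_realization D f r"
    and "0 < m" "0 \<le> \<alpha>" "\<alpha> \<le> 1/3"
  shows "norm (r m) / (norm f powr (1 - \<alpha>) * A1_norm D f powr \<alpha>) \<le> real m powr (- \<alpha> / 2)"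
proof -
  obtain g where "greedy_run D r g" "r 0 = f"
    using assms(1,4) by (rule pga_realization_greedy_run)
  then interpret greedy_run D r g by simp
  have "3 * real m * norm (r m) ^ 6 \<le> norm f ^ 4 * A1_norm D f ^ 2"
    using residual_decay assms(2,3) \<open>r 0 = f\<close> by blast
  moreover have "0 \<le> real m * norm (r m) ^ 6" by simp
  ultimately have "real m * norm (r m) ^ 6 \<le> norm f ^ 4 * A1_norm D f ^ 2" by linarith
  moreover have "norm (r m) \<le> norm f"
    using norm_residual_le_norm \<open>r 0 = f\<close> by blast
  ultimately show ?thesis
    using A1_norm_pos[OF assms(3) norm_dict assms(2)] assms(2,5-7) by (intro ratio_le_powr) auto
qed

lemma gamma_pga_le:
  assumes "0 < m" "0 \<le> \<alpha>" "\<alpha> \<le> 1/3"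
  shows "gamma_pga m \<alpha> TYPE('a::real_inner) \<le> ereal (real m powr (- \<alpha> / 2))"
  unfolding gamma_pga_def
  using pga_residual_ratio_le[OF _ _ _ _ assms] by (fastforce intro!: SUP_least)

section \<open>An extremal example\<close>

definition orthonormal_upto :: "(nat \<Rightarrow> 'a::real_inner) \<Rightarrow> nat \<Rightarrow> bool" where
  "orthonormal_upto e n \<longleftrightarrow> (\<forall>i<n. \<forall>j<n. inner (e i) (e j) = (if i = j then 1 else 0))"

lemma inner_sum_orthonormal:
  assumes "orthonormal_upto e n" "j < n" "A \<subseteq> {..<n}"
  shows "inner (\<Sum>i\<in>A. c i *\<^sub>R e i) (e j) = (if j \<in> A then c j else 0)"
proof -
  have "inner (\<Sum>i\<in>A. c i *\<^sub>R e i) (e j) = (\<Sum>i\<in>A. if i = j then c i else 0)"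
    unfolding inner_sum_left using assms by (intro sum.cong) (auto simp: orthonormal_upto_def)
  also have "\<dots> = (if j \<in> A then c j else 0)"
    using finite_subset[OF assms(3)] by simp
  finally show ?thesis .
qed

lemma inner_orthonormal_residual:
  assumes "orthonormal_upto e n" "j < n"
  shows "inner (x - (\<Sum>i<n. inner x (e i) *\<^sub>R e i)) (e j) = 0"
  using inner_sum_orthonormal[OF assms, of "{..<n}"] assms(2) by (simp add: inner_diff_left)

lemma orthonormal_upto_exists:
  assumes "\<not> (\<exists>S :: 'a::real_inner set. finite S \<and> span S = UNIV)"
  shows "\<exists>e :: nat \<Rightarrow> 'a. orthonormal_upto e n"
proof (induction n)
  case 0
  then show ?case by (simp add: orthonormal_upto_def)
next
  case (Suc n)
  then obtain e :: "nat \<Rightarrow> 'a" where e: "orthonormal_upto e n" by blast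
  obtain x where x: "x \<notin> span (e ` {..<n})" using assms by blast
  define y where "y = x - (\<Sum>i<n. inner x (e i) *\<^sub>R e i)"
  have "(\<Sum>i<n. inner x (e i) *\<^sub>R e i) \<in> span (e ` {..<n})"
    by (intro span_sum span_scale span_base) auto
  then have "y \<noteq> 0" using x by (auto simp: y_def)
  have "inner (y /\<^sub>R norm y) (e j) = 0" if "j < n" for j
    using inner_orthonormal_residual[OF e that] by (simp add: y_def)
  moreover have "inner (y /\<^sub>R norm y) (y /\<^sub>R norm y) = 1"
    using \<open>y \<noteq> 0\<close> by (simp add: dot_square_norm)
  ultimately have "orthonormal_upto (e(n := y /\<^sub>R norm y)) (Suc n)"
    using e by (auto simp: orthonormal_upto_def less_Suc_eq inner_commute)
  then show ?case by blast
qed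

text \<open>The unit vectors orthogonal to all \<open>e i\<close> make the span dense, but they are orthogonal
  to every residual and so are never selected.\<close>

definition orthonormal_dict :: "(nat \<Rightarrow> 'a::real_inner) \<Rightarrow> nat \<Rightarrow> 'a set" where
  "orthonormal_dict e N = e ` {..<N} \<union> uminus ` e ` {..<N}
     \<union> {u. norm u = 1 \<and> (\<forall>i<N. inner u (e i) = 0)}"

definition tail_sum :: "(nat \<Rightarrow> 'a::real_inner) \<Rightarrow> nat \<Rightarrow> nat \<Rightarrow> 'a" where
  "tail_sum e N k = (\<Sum>i\<in>{k..<N}. e i)"

context
  fixes e :: "nat \<Rightarrow> 'a::real_inner" and N :: nat
  assumes e: "orthonormal_upto e N"
begin

lemma inner_tail_sum:
  assumes "j < N"
  shows "inner (tail_sum e N k) (e j) = (if k \<le> j then 1 else 0)"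
proof -
  have "{k..<N} \<subseteq> {..<N}" by auto
  from inner_sum_orthonormal[OF e assms this, of "\<lambda>_. 1"] show ?thesis
    using assms by (simp add: tail_sum_def)
qed

lemma norm_tail_sum: "norm (tail_sum e N k) = sqrt (real (N - k))"
proof -
  have "norm (tail_sum e N k) ^ 2 = (\<Sum>j\<in>{k..<N}. inner (tail_sum e N k) (e j))"
    unfolding power2_norm_eq_inner by (subst (2) tail_sum_def) (simp add: inner_sum_right)
  also have "\<dots> = real (N - k)" by (simp add: inner_tail_sum)
  finally show ?thesis by (simp add: real_sqrt_unique)
qed

lemma dictionary_orthonormal_dict: "dictionary (orthonormal_dict e N)"
proof -
  have norm_e: "norm (e i) = 1" if "i < N" for i
    using e that by (simp add: orthonormal_upto_def norm_eq_1)
  have "x \<in> span (orthonormal_dict e N)" for x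
  proof -
    define p where "p = (\<Sum>i<N. inner x (e i) *\<^sub>R e i)"
    have "p \<in> span (orthonormal_dict e N)" unfolding p_def
      by (intro span_sum span_scale span_base) (auto simp: orthonormal_dict_def)
    moreover have "x - p \<in> span (orthonormal_dict e N)"
    proof (cases "x = p")
      case False
      then have "(x - p) /\<^sub>R norm (x - p) \<in> orthonormal_dict e N"
        using inner_orthonormal_residual[OF e] by (auto simp: orthonormal_dict_def p_def)
      then have "norm (x - p) *\<^sub>R ((x - p) /\<^sub>R norm (x - p)) \<in> span (orthonormal_dict e N)"
        by (intro span_scale span_base)
      then show ?thesis using False by simp
    qed (simp add: span_zero)
    ultimately show ?thesis using span_add by fastforce
  qed
  then have "span (orthonormal_dict e N) = UNIV" by auto
  then show ?thesis
    using norm_e unfolding dictionary_def by (auto simp: orthonormal_dict_def)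
qed

lemma pga_realization_tail_sum:
  assumes "0 < N"
  shows "pga_realization (orthonormal_dict e N) (tail_sum e N 0) (tail_sum e N)"
  unfolding pga_realization_def
proof (intro conjI allI)
  fix k
  show "\<exists>g\<in>orthonormal_dict e N.
          (\<forall>h\<in>orthonormal_dict e N. inner (tail_sum e N k) h \<le> inner (tail_sum e N k) g)
          \<and> tail_sum e N (Suc k) = tail_sum e N k - inner (tail_sum e N k) g *\<^sub>R g"
  proof (cases "k < N")
    case True
    have "inner (tail_sum e N k) h = 0" if "norm h = 1" "\<forall>i<N. inner h (e i) = 0" for h
      using that
      by (auto simp: tail_sum_def inner_sum_left inner_sum_right inner_commute intro!: sum.neutral)
    then have "inner (tail_sum e N k) h \<le> inner (tail_sum e N k) (e k)"
      if "h \<in> orthonormal_dict e N" for h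
      using that True by (auto simp: orthonormal_dict_def inner_tail_sum)
    moreover have "tail_sum e N (Suc k) = tail_sum e N k - e k"
      using True by (simp add: tail_sum_def sum.atLeast_Suc_lessThan)
    ultimately show ?thesis
      using True by (intro bexI[of _ "e k"]) (auto simp: inner_tail_sum orthonormal_dict_def)
  next
    case False
    then show ?thesis
      using assms by (intro bexI[of _ "e 0"]) (auto simp: tail_sum_def orthonormal_dict_def)
  qed
qed simp

lemma A1_scales_tail_sum:
  assumes "0 < N"
  shows "real N \<in> A1_scales (orthonormal_dict e N) (tail_sum e N 0)"
proof -
  have "inverse (real N) *\<^sub>R tail_sum e N 0 = (\<Sum>i\<in>{0..<N}. inverse (real N) *\<^sub>R e i)"
    by (simp add: tail_sum_def scaleR_sum_right)
  also have "\<dots> \<in> convex hull (orthonormal_dict e N)"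
    using assms by (intro convex_sum) (auto simp: orthonormal_dict_def intro: hull_inc)
  finally show ?thesis
    using assms closure_subset by (auto simp: A1_scales_def A1_def)
qed

end

lemma half_powr_le_ratio:
  fixes t M \<alpha> :: real
  assumes "0 < t" "0 < M" "M \<le> 2 * t" "0 \<le> \<alpha>" "\<alpha> \<le> 1"
  shows "1/2 * t powr (- \<alpha> / 2) \<le> sqrt t / (sqrt (2 * t) powr (1 - \<alpha>) * M powr \<alpha>)"
proof -
  have "sqrt (2 * t) powr (1 - \<alpha>) * M powr \<alpha> \<le> (2 * t) powr ((1 - \<alpha>) / 2) * (2 * t) powr \<alpha>"
  proof -
    have "sqrt (2 * t) powr (1 - \<alpha>) = (2 * t) powr ((1 - \<alpha>) / 2)"
      using assms(1) by (simp add: powr_powr flip: powr_half_sqrt)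
    moreover have "M powr \<alpha> \<le> (2 * t) powr \<alpha>" using assms by (intro powr_mono2) auto
    ultimately show ?thesis by (simp add: mult_left_mono)
  qed
  also have "\<dots> = (2 * t) powr ((1 + \<alpha>) / 2)"
    by (simp add: add_divide_distrib diff_divide_distrib add.commute flip: powr_add)
  also have "\<dots> = 2 powr ((1 + \<alpha>) / 2) * t powr ((1 + \<alpha>) / 2)"
    using assms(1) by (simp add: powr_mult)
  also have "\<dots> \<le> 2 * t powr ((1 + \<alpha>) / 2)"
    using powr_mono[of "(1 + \<alpha>) / 2" 1 2] assms(5) by (intro mult_right_mono) auto
  finally have den: "sqrt (2 * t) powr (1 - \<alpha>) * M powr \<alpha> \<le> 2 * t powr ((1 + \<alpha>) / 2)" .
  have "1/2 * t powr (- \<alpha> / 2) = sqrt t / (2 * t powr ((1 + \<alpha>) / 2))"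
    using assms(1) by (simp add: powr_diff [symmetric] field_simps flip: powr_half_sqrt)
  also have "\<dots> \<le> sqrt t / (sqrt (2 * t) powr (1 - \<alpha>) * M powr \<alpha>)"
    using assms(1,2) by (intro divide_left_mono den) auto
  finally show ?thesis .
qed

lemma gamma_pga_ge:
  assumes "\<not> (\<exists>S :: 'a::real_inner set. finite S \<and> span S = UNIV)"
    and "0 < m" "0 \<le> \<alpha>" "\<alpha> \<le> 1"
  shows "ereal (1/2 * real m powr (- \<alpha> / 2)) \<le> gamma_pga m \<alpha> TYPE('a)"
proof -
  obtain e :: "nat \<Rightarrow> 'a" where e: "orthonormal_upto e (2 * m)"
    using orthonormal_upto_exists[OF assms(1)] by blast
  define D where "D = orthonormal_dict e (2 * m)"
  define f where "f = tail_sum e (2 * m) 0"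
  define r where "r = tail_sum e (2 * m)"
  have "0 < 2 * m" using assms(2) by simp
  have norm_f: "norm f = sqrt (2 * real m)" and norm_r: "norm (r m) = sqrt (real m)"
    using norm_tail_sum[OF e] by (simp_all add: f_def r_def)
  have "f \<noteq> 0" using norm_f assms(2) by auto
  have dict: "dictionary D" using dictionary_orthonormal_dict[OF e] by (simp add: D_def)
  have pga: "pga_realization D f r"
    using pga_realization_tail_sum[OF e \<open>0 < 2 * m\<close>] by (simp add: D_def f_def r_def)
  have scale: "2 * real m \<in> A1_scales D f"
    using A1_scales_tail_sum[OF e \<open>0 < 2 * m\<close>] by (simp add: D_def f_def)
  have "0 < A1_norm D f"
    using dict scale \<open>f \<noteq> 0\<close> by (intro A1_norm_pos) (auto simp: dictionary_def)
  then have "1/2 * real m powr (- \<alpha> / 2) \<le> norm (r m) / (norm f powr (1 - \<alpha>) * A1_norm D f powr \<alpha>)"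
    unfolding norm_f norm_r using A1_norm_le[OF scale] assms(2-4)
    by (intro half_powr_le_ratio) auto
  then show ?thesis
    unfolding gamma_pga_def using dict \<open>f \<noteq> 0\<close> scale pga
    by (intro SUP_upper2[of "(D, f, r)"]) auto
qed

theorem mainTheorem3:
  fixes m :: nat and \<alpha> :: real
  assumes infdim: "\<not> (\<exists>S :: ('a::{real_inner, complete_space}) set. finite S \<and> span S = UNIV)"
    and m: "m \<ge> 1"
    and \<alpha>: "0 < \<alpha>" "\<alpha> \<le> 1/3"
  shows "ereal (1/2 * real m powr (- \<alpha> / 2)) \<le> gamma_pga m \<alpha> TYPE('a)
       \<and> gamma_pga m \<alpha> TYPE('a) \<le> ereal (real m powr (- \<alpha> / 2))"
  using gamma_pga_ge[OF infdim] gamma_pga_le[where 'a = 'a] m \<alpha> by simp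

end
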